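(* Let $i\in\mathbb{N}=\{0,1,2,\dots\}$ and let $w\in\{0,1\}^*$ be a $\frac{7}{3}$-power-free word with $|w|=5\cdot 2^i-1$. Let $a\in\{0,1\}$. Then the word $waw$ has a subword $x$ with $|x|\leq 5\cdot 2^i$ such that $x$ is a $\beta$-power for some rational $\beta\ge\frac{7}{3}$.
   Context: A word $w'$ is a subword of $w$ if $w=uw'v$ for some words $u,v$. For a rational $\beta\ge 1$, a $\beta$-power is a word of the form $y^ny'$ with $y$ a nonempty word, $y'$ a prefix of $y$, $n$ a nonnegative integer and $n+|y'|/|y|=\beta$. A word is $\alpha$-power-free if none of its subwords is a $\beta$-power for any rational $\beta\geq\alpha$. *)

theory Defs
  imports Complex_Main "HOL-Library.Sublist"
begin

text \<open>Words are lists; the binary alphabet is {0,1} :: nat.\<close>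

definition subword :: "'a list \<Rightarrow> 'a list \<Rightarrow> bool" where
  "subword x w \<longleftrightarrow> (\<exists>u v. w = u @ x @ v)"

definition is_power :: "rat \<Rightarrow> 'a list \<Rightarrow> bool" where
  "is_power \<beta> x \<longleftrightarrow> (\<exists>y y' n. y \<noteq> [] \<and> prefix y' y \<and>
      x = concat (replicate n y) @ y' \<and>
      of_nat n + of_nat (length y') / of_nat (length y) = \<beta>)"

definition power_free :: "rat \<Rightarrow> 'a list \<Rightarrow> bool" where
  "power_free \<alpha> w \<longleftrightarrow> (\<forall>x \<beta>. subword x w \<and> \<beta> \<ge> 1 \<and> \<beta> \<ge> \<alpha> \<longrightarrow> \<not> is_power \<beta> x)"

end

theory Submission
  imports Defs
begin

text \<open>
  Induction on \<open>i\<close>; for \<open>i = 0\<close> the 32 words \<open>w a w\<close> are checked directly.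
  In the step, \<open>s = w a w\<close> has length \<open>2p - 1\<close> and period \<open>p = |w| + 1\<close>, an even number.
  Suppose \<open>s\<close> has no \<open>\<beta>\<close>-power with \<open>\<beta> \<ge> 7/3\<close> of length at most \<open>p\<close>. Then it avoids
  \<open>aaa\<close>, \<open>ababa\<close> and \<open>abcabca\<close>, and with the help of the period also \<open>aabaa\<close>; consequently two
  squares \<open>aa\<close> never occur at odd distance, so after dropping at most one letter \<open>s\<close> is the
  image \<open>\<mu>(t)\<close> of a word \<open>t\<close> under the Thue-Morse morphism. The period forces \<open>t = y c y\<close> with
  \<open>\<mu>(y)\<close> a factor of \<open>w\<close>, so \<open>y\<close> is again \<open>7/3\<close>-power-free and the induction hypothesis
  yields a short power in \<open>y c y\<close>. Its image under \<open>\<mu>\<close> is a power with the same exponent and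
  twice the length in \<open>s\<close>, a contradiction.
\<close>

definition mu :: "nat list \<Rightarrow> nat list" where
  "mu x = concat (map (\<lambda>c. [c, 1 - c]) x)"

lemma mu_Nil [simp]: "mu [] = []"
  by (simp add: mu_def)

lemma mu_Cons [simp]: "mu (c # x) = c # (1 - c) # mu x"
  by (simp add: mu_def)

lemma mu_append [simp]: "mu (x @ y) = mu x @ mu y"
  by (simp add: mu_def)

lemma mu_eq_Nil_iff [simp]: "mu x = [] \<longleftrightarrow> x = []"
  by (cases x) auto

lemma length_mu [simp]: "length (mu x) = 2 * length x"
  by (induction x) auto

lemma set_subset_set_mu: "set x \<subseteq> set (mu x)"
  by (induction x) auto

lemma mu_concat_replicate: "mu (concat (replicate n y)) = concat (replicate n (mu y))"
  by (induction n) auto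

lemma prefix_mu_imp_prefix: "prefix (mu x) (mu y) \<Longrightarrow> prefix x y"
proof (induction x arbitrary: y)
  case (Cons c x)
  then show ?case by (cases y) auto
qed simp

lemma sublist_mu: "sublist x y \<Longrightarrow> sublist (mu x) (mu y)"
  by (metis mu_append sublist_appendI sublist_def)

lemma subword_iff_sublist: "subword x w \<longleftrightarrow> sublist x w"
  unfolding subword_def sublist_def by blast

lemma is_power_mu: "is_power \<beta> x \<Longrightarrow> is_power \<beta> (mu x)"
proof -
  assume "is_power \<beta> x"
  then obtain y y' n where "y \<noteq> []" "prefix y' y" "x = concat (replicate n y) @ y'"
    "of_nat n + of_nat (length y') / of_nat (length y) = \<beta>"
    unfolding is_power_def by blast
  then have "mu y \<noteq> []" "prefix (mu y') (mu y)" "mu x = concat (replicate n (mu y)) @ mu y'"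
    "of_nat n + of_nat (length (mu y')) / of_nat (length (mu y)) = \<beta>"
    by (auto simp: prefix_def mu_concat_replicate)
  then show ?thesis
    unfolding is_power_def by blast
qed

lemma power_free_sublist: "power_free \<alpha> z \<Longrightarrow> sublist y z \<Longrightarrow> power_free \<alpha> y"
  unfolding power_free_def subword_iff_sublist using sublist_order.order_trans by blast

lemma power_free_mu_imp_power_free: "power_free \<alpha> (mu y) \<Longrightarrow> power_free \<alpha> y"
  unfolding power_free_def subword_iff_sublist using sublist_mu is_power_mu by blast

lemma ex_mu_preimage:
  assumes "set u \<subseteq> {0, 1}" "even (length u)"
    and "\<And>m. 2 * m + 1 < length u \<Longrightarrow> u ! (2 * m) \<noteq> u ! (2 * m + 1)"
  shows "\<exists>t. mu t = u"
  using assms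
proof (induction u rule: induct_list012)
  case (3 c d u)
  have "u ! (2 * m) \<noteq> u ! (2 * m + 1)" if "2 * m + 1 < length u" for m
    using "3.prems"(3)[of "Suc m"] that by simp
  then obtain t where "mu t = u"
    using "3.IH"(1) "3.prems"(1,2) by auto
  moreover have "d = 1 - c"
    using "3.prems"(1) "3.prems"(3)[of 0] by auto
  ultimately show ?case
    by (metis mu_Cons)
qed auto

definition short_power :: "nat \<Rightarrow> 'a list \<Rightarrow> bool" where
  "short_power p s \<longleftrightarrow> (\<exists>x \<beta>. subword x s \<and> length x \<le> p \<and> \<beta> \<ge> 7/3 \<and> is_power \<beta> x)"

lemma short_powerI:
  "sublist x s \<Longrightarrow> length x \<le> p \<Longrightarrow> 7/3 \<le> \<beta> \<Longrightarrow> is_power \<beta> x \<Longrightarrow> short_power p s"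
  unfolding short_power_def subword_iff_sublist by blast

lemma short_power_sublist: "short_power p x \<Longrightarrow> sublist x s \<Longrightarrow> short_power p s"
  unfolding short_power_def subword_iff_sublist using sublist_order.order_trans by blast

lemma short_power_mu: "short_power p t \<Longrightarrow> short_power (2 * p) (mu t)"
  unfolding short_power_def subword_iff_sublist using sublist_mu is_power_mu by fastforce

lemma is_power_cube: "is_power 3 [a, a, a]"
  unfolding is_power_def
  by (rule exI[of _ "[a]"], rule exI[of _ "[]"], rule exI[of _ 3]) (simp add: numeral_eq_Suc)

lemma is_power_ababa: "is_power (5/2) [a, b, a, b, a]"
  unfolding is_power_def
  by (rule exI[of _ "[a, b]"], rule exI[of _ "[a]"], rule exI[of _ 2]) (simp add: numeral_eq_Suc)

lemma is_power_abcabca: "is_power (7/3) [a, b, c, a, b, c, a]"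
  unfolding is_power_def
  by (rule exI[of _ "[a, b, c]"], rule exI[of _ "[a]"], rule exI[of _ 2]) (simp add: numeral_eq_Suc)

lemma sublist_take_drop: "sublist (take n (drop k xs)) xs"
  by (rule sublist_order.order_trans[OF sublist_take sublist_drop])

lemma sublist_nth_window: "k + n \<le> length s \<Longrightarrow> sublist (map (\<lambda>q. s ! (k + q)) [0..<n]) s"
proof -
  assume "k + n \<le> length s"
  then have "map (\<lambda>q. s ! (k + q)) [0..<n] = take n (drop k s)"
    by (intro nth_equalityI) auto
  then show ?thesis
    using sublist_take_drop by metis
qed

text \<open>In the application \<open>s = w a w\<close> and \<open>p = |w| + 1\<close>.\<close>

locale periodic_short_power_free =
  fixes s :: "nat list" and p :: nat
  assumes binary: "set s \<subseteq> {0, 1}"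
    and length_s: "length s = 2 * p - 1"
    and period: "\<And>k. k + p < length s \<Longrightarrow> s ! k = s ! (k + p)"
    and seven_le_p: "7 \<le> p"
    and no_short_power: "\<not> short_power p s"
begin

lemma nth_binary: "k < length s \<Longrightarrow> s ! k \<in> {0, 1}"
  using binary nth_mem by blast

lemma no_short_power_factor:
  "k + n \<le> length s \<Longrightarrow> n \<le> p \<Longrightarrow> 7/3 \<le> \<beta> \<Longrightarrow>
    \<not> is_power \<beta> (map (\<lambda>q. s ! (k + q)) [0..<n])"
  using no_short_power short_powerI[OF sublist_nth_window, of k n] by auto

lemma no_cube:
  "k + 2 < length s \<Longrightarrow> s ! k = s ! (k + 1) \<Longrightarrow> s ! (k + 1) = s ! (k + 2) \<Longrightarrow> False"
  using no_short_power_factor[of k 3 3] is_power_cube[of "s ! k"] seven_le_p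
  by (simp add: eval_nat_numeral upt_rec)

lemma no_ababa:
  "k + 4 < length s \<Longrightarrow> s ! k = s ! (k + 2) \<Longrightarrow> s ! (k + 1) = s ! (k + 3) \<Longrightarrow>
    s ! (k + 2) = s ! (k + 4) \<Longrightarrow> False"
  using no_short_power_factor[of k 5 "5/2"] is_power_ababa[of "s ! k" "s ! (k + 1)"] seven_le_p
  by (simp add: eval_nat_numeral upt_rec)

lemma no_abcabca:
  "k + 6 < length s \<Longrightarrow> s ! k = s ! (k + 3) \<Longrightarrow> s ! (k + 1) = s ! (k + 4) \<Longrightarrow>
    s ! (k + 2) = s ! (k + 5) \<Longrightarrow> s ! (k + 3) = s ! (k + 6) \<Longrightarrow> False"
  using no_short_power_factor[of k 7 "7/3"] seven_le_p
    is_power_abcabca[of "s ! k" "s ! (k + 1)" "s ! (k + 2)"]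
  by (simp add: eval_nat_numeral upt_rec)

definition aabaa_at :: "nat \<Rightarrow> bool" where
  "aabaa_at j \<longleftrightarrow> j + 4 < length s \<and> s ! j = s ! (j + 1) \<and> s ! (j + 1) \<noteq> s ! (j + 2)
     \<and> s ! (j + 2) \<noteq> s ! (j + 3) \<and> s ! (j + 3) = s ! (j + 4)"

text \<open>Flanked by letters on both sides, \<open>aabaa\<close> becomes \<open>baabaab\<close>, since \<open>aaa\<close> is excluded.\<close>

lemma not_aabaa_at_interior: "aabaa_at (Suc i) \<Longrightarrow> i + 6 < length s \<Longrightarrow> False"
proof -
  assume "aabaa_at (Suc i)" and len: "i + 6 < length s"
  then have eqs: "s ! (i + 1) = s ! (i + 2)" "s ! (i + 2) \<noteq> s ! (i + 3)"
      "s ! (i + 3) \<noteq> s ! (i + 4)" "s ! (i + 4) = s ! (i + 5)"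
    unfolding aabaa_at_def by (simp_all add: eval_nat_numeral)
  have "s ! (i + q) \<in> {0, 1}" if "q \<le> 6" for q
    using nth_binary[of "i + q"] len that by simp
  note bin = this[of 0] this[of 1] this[of 2] this[of 3] this[of 4] this[of 5] this[of 6]
  have "s ! i \<noteq> s ! (i + 1)" "s ! (i + 5) \<noteq> s ! (i + 6)"
    using no_cube[of i] no_cube[of "i + 4"] eqs len by (auto simp: eval_nat_numeral)
  then have "s ! i = s ! (i + 3)" "s ! (i + 1) = s ! (i + 4)" "s ! (i + 2) = s ! (i + 5)"
      "s ! (i + 3) = s ! (i + 6)"
    using eqs bin by auto
  then show False
    using no_abcabca[of i] len by (simp add: eval_nat_numeral)
qed

lemma aabaa_at_shift: "aabaa_at j \<Longrightarrow> j + p + 4 < length s \<Longrightarrow> aabaa_at (j + p)"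
  and aabaa_at_unshift: "aabaa_at (j + p) \<Longrightarrow> aabaa_at j"
  using period[of j] period[of "j + 1"] period[of "j + 2"] period[of "j + 3"] period[of "j + 4"]
  unfolding aabaa_at_def by (simp_all add: algebra_simps)

text \<open>Near the ends of \<open>s\<close>, the period moves an occurrence of \<open>aabaa\<close> into the interior.\<close>

lemma not_aabaa_at: "\<not> aabaa_at j"
proof
  assume j: "aabaa_at j"
  then have "j + 4 < length s"
    unfolding aabaa_at_def by simp
  then consider "1 \<le> j" "j + 5 < length s" | "j = 0" | "p + 1 \<le> j"
    using length_s seven_le_p by linarith
  then show False
  proof cases
    case 1
    then show False
      using j not_aabaa_at_interior[of "j - 1"] by simp
  next
    case 2
    then have "aabaa_at p"
      using j aabaa_at_shift[of j] length_s seven_le_p by simp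
    then show False
      using not_aabaa_at_interior[of "p - 1"] length_s seven_le_p by (cases p) auto
  next
    case 3
    then have "aabaa_at (Suc (j - p - 1))"
      using j aabaa_at_unshift[of "j - p"] by (simp add: Suc_diff_Suc)
    then show False
      by (rule not_aabaa_at_interior) (use 3 \<open>j + 4 < length s\<close> length_s in linarith)
  qed
qed

text \<open>
  Between two nearest squares the word alternates, so at odd distance \<open>1\<close>, \<open>3\<close> or \<open>\<ge> 5\<close>
  it contains \<open>aaa\<close>, \<open>aabaa\<close> or \<open>ababa\<close>.
\<close>

lemma no_squares_at_odd_distance:
  "j < j' \<Longrightarrow> odd (j' - j) \<Longrightarrow> j' + 1 < length s \<Longrightarrow> s ! j = s ! (j + 1) \<Longrightarrow>
    s ! j' = s ! (j' + 1) \<Longrightarrow> False"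
proof (induction "j' - j" arbitrary: j j' rule: less_induct)
  case less
  show False
  proof (cases "\<exists>k. j < k \<and> k < j' \<and> s ! k = s ! (k + 1)")
    case True
    then obtain k where k: "j < k" "k < j'" "s ! k = s ! (k + 1)"
      by blast
    have "j' - j = (j' - k) + (k - j)"
      using k by simp
    then consider "odd (k - j)" | "odd (j' - k)"
      using less.prems(2) by (metis even_add)
    then show False
    proof cases
      case 1
      have "k - j < j' - j" "k + 1 < length s"
        using k less.prems(3) by linarith+
      then show False
        using less.hyps[of k j] k 1 less.prems(4) by blast
    next
      case 2
      have "j' - k < j' - j"
        using k by linarith
      then show False
        using less.hyps[of j' k] k 2 less.prems(3,5) by blast
    qed
  next
    case False
    then have alternating: "s ! k \<noteq> s ! (k + 1)" if "j < k" "k < j'" for k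
      using that by blast
    have "j' = j + 1 \<or> j' = j + 3 \<or> j + 5 \<le> j'"
      using less.prems(1,2) by presburger
    then consider "j' = j + 1" | "j' = j + 3" | "j + 5 \<le> j'"
      by blast
    then show False
    proof cases
      case 1
      then show False
        using no_cube[of j] less.prems by simp
    next
      case 2
      then have "aabaa_at j"
        unfolding aabaa_at_def using alternating[of "j + 1"] alternating[of "j + 2"] less.prems
        by (simp add: eval_nat_numeral)
      then show False
        using not_aabaa_at by blast
    next
      case 3
      have "s ! (j + q) \<in> {0, 1}" if "q \<le> 5" for q
        using nth_binary[of "j + q"] 3 less.prems(3) that by simp
      note bin = this[of 1] this[of 2] this[of 3] this[of 4] this[of 5]
      have "s ! (j + q) \<noteq> s ! (j + q + 1)" if "1 \<le> q" "q \<le> 4" for q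
        using alternating[of "j + q"] 3 that by simp
      note alt = this[of 1] this[of 2] this[of 3] this[of 4]
      have "s ! (j + 1) = s ! (j + 3)" "s ! (j + 2) = s ! (j + 4)" "s ! (j + 3) = s ! (j + 5)"
        using bin alt by (auto simp: eval_nat_numeral)
      then show False
        using no_ababa[of "j + 1"] 3 less.prems(3) by (simp add: eval_nat_numeral)
    qed
  qed
qed

lemma alternating_parity:
  "\<exists>\<delta>\<le>1. \<forall>m. \<delta> + 2 * m + 1 < length s \<longrightarrow> s ! (\<delta> + 2 * m) \<noteq> s ! (\<delta> + 2 * m + 1)"
proof (cases "\<exists>j. j + 1 < length s \<and> s ! j = s ! (j + 1) \<and> even j")
  case True
  then obtain j where j: "j + 1 < length s" "s ! j = s ! (j + 1)" "even j"
    by blast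
  have "s ! (1 + 2 * m) \<noteq> s ! (1 + 2 * m + 1)" if "1 + 2 * m + 1 < length s" for m
  proof
    assume square: "s ! (1 + 2 * m) = s ! (1 + 2 * m + 1)"
    show False
    proof (cases "j < 1 + 2 * m")
      case True
      then show False
        using no_squares_at_odd_distance[of j "1 + 2 * m"] j square that by simp
    next
      case False
      then have "1 + 2 * m < j"
        using j(3) by presburger
      then show False
        using no_squares_at_odd_distance[of "1 + 2 * m" j] j square that by simp
    qed
  qed
  then show ?thesis
    by (intro exI[of _ 1]) auto
next
  case False
  then show ?thesis
    by (intro exI[of _ 0]) auto
qed

lemma ex_mu_preimage_factor: "\<exists>\<delta>\<le>1. \<exists>t. mu t = take (2 * p - 2) (drop \<delta> s)"
proof -
  obtain \<delta> where \<delta>: "\<delta> \<le> 1"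
    and alt: "\<And>m. \<delta> + 2 * m + 1 < length s \<Longrightarrow> s ! (\<delta> + 2 * m) \<noteq> s ! (\<delta> + 2 * m + 1)"
    using alternating_parity by blast
  define u where "u = take (2 * p - 2) (drop \<delta> s)"
  have length_u: "length u = 2 * p - 2"
    unfolding u_def using \<delta> length_s by simp
  have "set u \<subseteq> {0, 1}"
    unfolding u_def using binary set_drop_subset set_take_subset by fast
  moreover have "u ! (2 * m) \<noteq> u ! (2 * m + 1)" if "2 * m + 1 < length u" for m
    using alt[of m] that length_u length_s \<delta> unfolding u_def by (simp add: add.assoc)
  ultimately have "\<exists>t. mu t = u"
    using ex_mu_preimage length_u by simp
  then show ?thesis
    using \<delta> unfolding u_def by blast
qed

end

lemma nth_w_a_w_period:
  "k + (length w + 1) < length (w @ [a] @ w) \<Longrightarrow>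
    (w @ [a] @ w) ! k = (w @ [a] @ w) ! (k + (length w + 1))"
  by (simp add: nth_append)

lemma take_drop_w_a_w:
  assumes "length w = 2 * h - 1" "\<delta> \<le> 1" "1 \<le> h"
  shows "take (4 * h - 2) (drop \<delta> (w @ [a] @ w)) =
      take (2 * h) (drop \<delta> (w @ [a] @ w)) @ take (2 * h - 2) (drop \<delta> w)"
    and "take (2 * h - 2) (drop \<delta> (w @ [a] @ w)) = take (2 * h - 2) (drop \<delta> w)"
proof -
  have "length (w @ [a]) = 2 * h"
    using assms(1,3) by simp
  then have "drop (2 * h + \<delta>) ((w @ [a]) @ w) = drop \<delta> w"
    by (simp only: drop_append) simp
  then have "drop (2 * h) (drop \<delta> (w @ [a] @ w)) = drop \<delta> w"
    by (simp only: drop_drop append_assoc)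
  then show "take (4 * h - 2) (drop \<delta> (w @ [a] @ w)) =
      take (2 * h) (drop \<delta> (w @ [a] @ w)) @ take (2 * h - 2) (drop \<delta> w)"
    using take_add[of "2 * h" "2 * h - 2" "drop \<delta> (w @ [a] @ w)"] assms(3) by simp
  show "take (2 * h - 2) (drop \<delta> (w @ [a] @ w)) = take (2 * h - 2) (drop \<delta> w)"
    using assms by (simp add: take_append)
qed

lemma mu_preimage_w_a_w:
  assumes mu_t: "mu t = take (4 * h - 2) (drop \<delta> (w @ [a] @ w))"
    and length_w: "length w = 2 * h - 1" and "\<delta> \<le> 1" "1 \<le> h"
  shows "\<exists>y c. t = y @ [c] @ y \<and> sublist (mu y) w"
proof -
  define y where "y = drop h t"
  have length_t: "length t = 2 * h - 1"
    using arg_cong[OF mu_t, of length] length_w assms(3,4) by simp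
  have "mu (take h t) @ mu y =
      take (2 * h) (drop \<delta> (w @ [a] @ w)) @ take (2 * h - 2) (drop \<delta> w)"
    using mu_t take_drop_w_a_w(1)[OF length_w assms(3,4)]
    unfolding y_def mu_append[symmetric] by simp
  moreover have "length (mu (take h t)) = length (take (2 * h) (drop \<delta> (w @ [a] @ w)))"
    using length_t length_w assms(3,4) by simp
  ultimately have mu_first: "mu (take h t) = take (2 * h) (drop \<delta> (w @ [a] @ w))"
    and mu_y: "mu y = take (2 * h - 2) (drop \<delta> w)"
    using append_eq_append_conv by blast+
  have "mu y = take (2 * h - 2) (mu (take h t))"
    unfolding mu_y mu_first take_take min.absorb1[OF diff_le_self]
    by (rule take_drop_w_a_w(2)[OF length_w assms(3,4), symmetric])
  then have "prefix y (take h t)"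
    by (metis prefix_mu_imp_prefix take_is_prefix)
  then obtain z where z: "take h t = y @ z"
    by (auto simp: prefix_def)
  moreover have "length z = 1"
    using arg_cong[OF z, of length] length_t assms(4) unfolding y_def by simp
  ultimately obtain c where "take h t = y @ [c]"
    by (cases z) auto
  then have "t = y @ [c] @ y"
    using append_take_drop_id[of h t] unfolding y_def by simp
  moreover have "sublist (mu y) w"
    unfolding mu_y by (rule sublist_take_drop)
  ultimately show ?thesis
    by blast
qed

lemma short_power_doubling:
  fixes w :: "nat list"
  assumes short_power_half: "\<And>(y :: nat list) c. set y \<subseteq> {0, 1} \<Longrightarrow> c \<in> {0, 1} \<Longrightarrow>
      power_free (7/3) y \<Longrightarrow> length y = h - 1 \<Longrightarrow> short_power h (y @ [c] @ y)"
    and binary: "set w \<subseteq> {0, 1}" "a \<in> {0, 1}"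
    and power_free: "power_free (7/3) w"
    and length_w: "length w = 2 * h - 1" and "4 \<le> h"
  shows "short_power (2 * h) (w @ [a] @ w)"
proof (rule ccontr)
  define s where "s = w @ [a] @ w"
  assume "\<not> short_power (2 * h) (w @ [a] @ w)"
  then interpret periodic_short_power_free s "2 * h"
  proof unfold_locales
    show "set s \<subseteq> {0, 1}" "length s = 2 * (2 * h) - 1" "7 \<le> 2 * h"
      unfolding s_def using binary length_w \<open>4 \<le> h\<close> by auto
    show "s ! k = s ! (k + 2 * h)" if "k + 2 * h < length s" for k
      using nth_w_a_w_period[of k w a] that length_w \<open>4 \<le> h\<close> unfolding s_def by simp
  qed (simp add: s_def)
  obtain \<delta> t where "\<delta> \<le> 1" and mu_t: "mu t = take (4 * h - 2) (drop \<delta> s)"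
    using ex_mu_preimage_factor by (auto simp: mult.assoc)
  then obtain y c where t: "t = y @ [c] @ y" and "sublist (mu y) w"
    using mu_preimage_w_a_w[of t h \<delta> w a] length_w \<open>4 \<le> h\<close> unfolding s_def by auto
  have sublist_mu_t: "sublist (mu t) s"
    unfolding mu_t by (rule sublist_take_drop)
  have "set t \<subseteq> {0, 1}"
    using set_subset_set_mu[of t] set_mono_sublist[OF sublist_mu_t] binary unfolding s_def by auto
  then have "set y \<subseteq> {0, 1}" "c \<in> {0, 1}"
    unfolding t by auto
  moreover have "power_free (7/3) y"
    using power_free_mu_imp_power_free power_free_sublist power_free \<open>sublist (mu y) w\<close> by blast
  moreover have "length y = h - 1"
    using arg_cong[OF mu_t, of length] length_w \<open>\<delta> \<le> 1\<close> unfolding t s_def by simp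
  ultimately have "short_power h t"
    unfolding t by (rule short_power_half)
  then have "short_power (2 * h) s"
    using short_power_mu short_power_sublist sublist_mu_t by blast
  then show False
    using no_short_power by blast
qed

lemma short_power_base:
  fixes w :: "nat list"
  assumes binary: "set w \<subseteq> {0, 1}" "a \<in> {0, 1}"
    and power_free: "power_free (7/3) w" and length_w: "length w = 4"
  shows "short_power 5 (w @ [a] @ w)"
proof -
  obtain b0 b1 b2 b3 where w: "w = [b0, b1, b2, b3]"
    using length_w by (auto simp: numeral_eq_Suc length_Suc_conv)
  have "b0 = 0 \<or> b0 = 1" "b1 = 0 \<or> b1 = 1" "b2 = 0 \<or> b2 = 1" "b3 = 0 \<or> b3 = 1" "a = 0 \<or> a = 1"
    using binary unfolding w by auto
  then have "sublist [0, 0, 0] w \<or> sublist [1, 1, 1] w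
      \<or> sublist [0, 0, 0] (w @ [a] @ w) \<or> sublist [1, 1, 1] (w @ [a] @ w)
      \<or> sublist [0, 1, 0, 1, 0] (w @ [a] @ w) \<or> sublist [1, 0, 1, 0, 1] (w @ [a] @ w)"
    unfolding w by (elim disjE) (simp_all add: sublist_Cons_right)
  moreover have "\<not> sublist [c, c, c] w" for c
    using power_free is_power_cube[of c] unfolding power_free_def subword_iff_sublist by fastforce
  ultimately show ?thesis
    using short_powerI[of _ _ 5 3] short_powerI[of _ _ 5 "5/2"] is_power_cube is_power_ababa by fastforce
qed

lemma short_power_w_a_w:
  fixes w :: "nat list"
  assumes "set w \<subseteq> {0, 1}" "a \<in> {0, 1}" "power_free (7/3) w" "length w = 5 * 2 ^ i - 1"
  shows "short_power (5 * 2 ^ i) (w @ [a] @ w)"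
  using assms
proof (induction i arbitrary: w a)
  case 0
  then show ?case
    using short_power_base by simp
next
  case (Suc i)
  have "4 \<le> 5 * (2::nat) ^ i"
    using one_le_power[of "2::nat" i] by linarith
  then show ?case
    using short_power_doubling[of "5 * 2 ^ i" w a] Suc by simp
qed

theorem lemma6:
  fixes i :: nat and w :: "nat list" and a :: nat
  assumes "set w \<subseteq> {0, 1}"
    and "power_free (7/3) w"
    and "length w = 5 * 2 ^ i - 1"
    and "a \<in> {0, 1}"
  shows "\<exists>x \<beta>. subword x (w @ [a] @ w) \<and> length x \<le> 5 * 2 ^ i \<and>
           \<beta> \<ge> 7/3 \<and> is_power \<beta> x"
  using short_power_w_a_w[OF assms(1,4,2,3)] unfolding short_power_def .

end
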